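(* Let $\mathbb{T}$ be a time scale, $\alpha\in(0,1]$, $m\ge 2$ an integer, and $t\in\mathbb{T}^k$. Let $f_1,\dots,f_m:\mathbb{T}\to\mathbb{R}$ each be continuous on $\mathbb{T}^k$ and nabla fractional differentiable of order $\alpha$ at $t$. Then $\prod_{i=1}^m f_i$ is nabla fractional differentiable of order $\alpha$ at $t$ and $$\nabla^{(\alpha)}\Big(\prod_{i=1}^m f_i\Big)(t)=\sum_{i=1}^m\Big(\prod_{1\le j\le i-1}f_j(\rho(t))\cdot\nabla^{(\alpha)}f_i(t)\cdot\prod_{i+1\le j\le m}f_j(t)\Big),$$ with empty products equal to $1$.
   Context: A time scale $\mathbb{T}$ is a nonempty closed subset of $\mathbb{R}$ with the relative topology. For $t\in\mathbb{T}$: $\rho(t)=\sup\{s\in\mathbb{T}:s<t\}$, $\sigma(t)=\inf\{s\in\mathbb{T}:s>t\}$. If $\mathbb{T}$ has a minimum $m_0$ with $\sigma(m_0)>m_0$ then $\mathbb{T}^k=\mathbb{T}\setminus\{m_0\}$, else $\mathbb{T}^k=\mathbb{T}$. $U_\delta(t)=(t-\delta,t+\delta)\cap\mathbb{T}$, $U^-_\delta(t)=(t-\delta,t)\cap\mathbb{T}$. Let $Q=\{1/q: q \text{ an odd positive integer}\}$; for $\alpha\in Q$, $x^\alpha$ is the real $q$-th root. Definition: $h:\mathbb{T}\to\mathbb{R}$ is nabla fractional differentiable of order $\alpha$ at $t\in\mathbb{T}^k$ if there is $L\in\mathbb{R}$ such that for every $\varepsilon>0$ there is $\delta>0$ with $|[h(\rho(t))-h(s)]-L[\rho(t)-s]^\alpha|\le\varepsilon|\rho(t)-s|^\alpha$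 for all $s\in U_\delta(t)$ if $\alpha\in Q$, resp. all $s\in U^-_\delta(t)$ if $\alpha\notin Q$; then $\nabla^{(\alpha)}h(t):=L$. *)

theory Defs
  imports "HOL-Analysis.Analysis"
begin

definition time_scale :: "real set \<Rightarrow> bool" where
  "time_scale T \<longleftrightarrow> T \<noteq> {} \<and> closed T"

definition rho :: "real set \<Rightarrow> real \<Rightarrow> real" where
  "rho T t = (if {s\<in>T. s < t} = {} then t else Sup {s\<in>T. s < t})"

definition sigma :: "real set \<Rightarrow> real \<Rightarrow> real" where
  "sigma T t = (if {s\<in>T. s > t} = {} then t else Inf {s\<in>T. s > t})"

definition Tk :: "real set \<Rightarrow> real set" where
  "Tk T = (if (\<exists>m0\<in>T. (\<forall>s\<in>T. m0 \<le> s) \<and> sigma T m0 > m0)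
           then T - {THE m0. m0 \<in> T \<and> (\<forall>s\<in>T. m0 \<le> s)} else T)"

definition Qodd :: "real set" where
  "Qodd = {1 / real q | q::nat. odd q}"

text \<open>x^alpha: for alpha = 1/q (q odd) the real q-th root, otherwise the usual power.\<close>
definition fpow :: "real \<Rightarrow> real \<Rightarrow> real" where
  "fpow \<alpha> x = (if \<alpha> \<in> Qodd then sgn x * \<bar>x\<bar> powr \<alpha> else x powr \<alpha>)"

definition nabla_frac_has_deriv ::
  "real set \<Rightarrow> real \<Rightarrow> (real \<Rightarrow> real) \<Rightarrow> real \<Rightarrow> real \<Rightarrow> bool" where
  "nabla_frac_has_deriv T \<alpha> h t L \<longleftrightarrow> t \<in> Tk T \<and>
     (\<forall>\<epsilon>>0. \<exists>\<delta>>0. \<forall>s\<in>T.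
        (if \<alpha> \<in> Qodd then t - \<delta> < s \<and> s < t + \<delta> else t - \<delta> < s \<and> s < t) \<longrightarrow>
        \<bar>(h (rho T t) - h s) - L * fpow \<alpha> (rho T t - s)\<bar> \<le> \<epsilon> * \<bar>rho T t - s\<bar> powr \<alpha>)"

end

theory Submission
  imports Defs
begin

text \<open>The two-factor rule is the classical one: writing \<open>r = \<rho>(t)\<close> and \<open>p = (r - s)\<^sup>\<alpha>\<close>,
  \<open>f(r)g(r) - f(s)g(s) - (f'g(t) + f(r)g')p\<close> splits into \<open>f(r)\<close> times the error of \<open>g\<close>,
  \<open>g(s)\<close> times the error of \<open>f\<close>, and \<open>(g(s) - g(t)) f' p\<close>; the last term is small by
  continuity of \<open>g\<close> at \<open>t\<close> since \<open>|p| \<le> |r - s|\<^sup>\<alpha>\<close>. Induction on the number of factors,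
  peeling off the last one, then yields the general Leibniz formula.\<close>

definition nabla_nbhd :: "real set \<Rightarrow> real \<Rightarrow> real \<Rightarrow> real \<Rightarrow> real set" where
  "nabla_nbhd T \<alpha> t \<delta> =
     {s \<in> T. if \<alpha> \<in> Qodd then t - \<delta> < s \<and> s < t + \<delta> else t - \<delta> < s \<and> s < t}"

lemma nabla_frac_has_deriv_iff:
  "nabla_frac_has_deriv T \<alpha> h t L \<longleftrightarrow> t \<in> Tk T \<and>
     (\<forall>\<epsilon>>0. \<exists>\<delta>>0. \<forall>s\<in>nabla_nbhd T \<alpha> t \<delta>.
        \<bar>(h (rho T t) - h s) - L * fpow \<alpha> (rho T t - s)\<bar> \<le> \<epsilon> * \<bar>rho T t - s\<bar> powr \<alpha>)"
  unfolding nabla_frac_has_deriv_def nabla_nbhd_def by (simp add: Ball_def imp_conjL)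

lemma nabla_nbhd_mono: "\<delta> \<le> \<delta>' \<Longrightarrow> nabla_nbhd T \<alpha> t \<delta> \<subseteq> nabla_nbhd T \<alpha> t \<delta>'"
  by (auto simp: nabla_nbhd_def)

lemma dist_less_if_in_nabla_nbhd: "s \<in> nabla_nbhd T \<alpha> t \<delta> \<Longrightarrow> dist s t < \<delta>"
  by (auto simp: nabla_nbhd_def dist_real_def split: if_splits)

lemma le_rho:
  assumes "s \<in> T" "s < t"
  shows "s \<le> rho T t"
proof -
  have "bdd_above {s\<in>T. s < t}" by (rule bdd_aboveI[of _ t]) auto
  then have "s \<le> Sup {s\<in>T. s < t}" using assms by (intro cSup_upper) auto
  then show ?thesis using assms unfolding rho_def by auto
qed

lemma abs_fpow_rho_le:
  assumes "s \<in> nabla_nbhd T \<alpha> t \<delta>"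
  shows "\<bar>fpow \<alpha> (rho T t - s)\<bar> \<le> \<bar>rho T t - s\<bar> powr \<alpha>"
proof (cases "\<alpha> \<in> Qodd")
  case True
  then show ?thesis by (simp add: fpow_def abs_mult sgn_if)
next
  case False
  with assms have "s \<in> T" "s < t" by (auto simp: nabla_nbhd_def)
  then have "0 \<le> rho T t - s" using le_rho by simp
  then show ?thesis using False by (simp add: fpow_def)
qed

lemma product_increment_estimate:
  fixes fr fs gr gs gt Lf Lg p w e :: real
  assumes f: "\<bar>(fr - fs) - Lf * p\<bar> \<le> e * w"
    and g: "\<bar>(gr - gs) - Lg * p\<bar> \<le> e * w"
    and p: "\<bar>p\<bar> \<le> w"
    and gs: "\<bar>gs - gt\<bar> \<le> min 1 e"
  shows "\<bar>(fr * gr - fs * gs) - (Lf * gt + fr * Lg) * p\<bar> \<le> (\<bar>fr\<bar> + \<bar>gt\<bar> + \<bar>Lf\<bar> + 1) * e * w"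
proof -
  have "w \<ge> 0" "e \<ge> 0" using p gs by auto
  have "(fr * gr - fs * gs) - (Lf * gt + fr * Lg) * p
          = fr * ((gr - gs) - Lg * p) + gs * ((fr - fs) - Lf * p) + (gs - gt) * Lf * p"
    by (simp add: algebra_simps)
  also have "\<bar>\<dots>\<bar> \<le> \<bar>fr\<bar> * \<bar>(gr - gs) - Lg * p\<bar> + \<bar>gs\<bar> * \<bar>(fr - fs) - Lf * p\<bar>
                      + \<bar>gs - gt\<bar> * \<bar>Lf\<bar> * \<bar>p\<bar>"
    unfolding abs_mult[symmetric]
    by (intro abs_triangle_ineq[THEN order_trans] add_mono abs_triangle_ineq order_refl)
  also have "\<dots> \<le> \<bar>fr\<bar> * (e * w) + (\<bar>gt\<bar> + 1) * (e * w) + e * \<bar>Lf\<bar> * w"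
    using f g p gs \<open>w \<ge> 0\<close> \<open>e \<ge> 0\<close>
    by (intro add_mono mult_mono) auto
  finally show ?thesis by (simp add: algebra_simps)
qed

lemma nabla_frac_has_deriv_mult:
  fixes T :: "real set" and t :: real
  defines "r \<equiv> rho T t"
  assumes f: "nabla_frac_has_deriv T \<alpha> f t Lf"
    and g: "nabla_frac_has_deriv T \<alpha> g t Lg"
    and g_cont: "continuous (at t within T) g"
  shows "nabla_frac_has_deriv T \<alpha> (\<lambda>s. f s * g s) t (Lf * g t + f r * Lg)"
  unfolding nabla_frac_has_deriv_iff r_def[symmetric]
proof (intro conjI allI impI)
  show "t \<in> Tk T" using f by (simp add: nabla_frac_has_deriv_def)
  fix \<epsilon> :: real assume "\<epsilon> > 0"
  define M where "M = \<bar>f r\<bar> + \<bar>g t\<bar> + \<bar>Lf\<bar> + 1"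
  define e where "e = \<epsilon> / M"
  have "M > 0" by (simp add: M_def add_pos_nonneg)
  then have "e > 0" using \<open>\<epsilon> > 0\<close> by (simp add: e_def)
  obtain \<delta>f where "\<delta>f > 0" and \<delta>f: "\<And>s. s \<in> nabla_nbhd T \<alpha> t \<delta>f \<Longrightarrow>
      \<bar>(f r - f s) - Lf * fpow \<alpha> (r - s)\<bar> \<le> e * \<bar>r - s\<bar> powr \<alpha>"
    using f \<open>e > 0\<close> unfolding nabla_frac_has_deriv_iff r_def by blast
  obtain \<delta>g where "\<delta>g > 0" and \<delta>g: "\<And>s. s \<in> nabla_nbhd T \<alpha> t \<delta>g \<Longrightarrow>
      \<bar>(g r - g s) - Lg * fpow \<alpha> (r - s)\<bar> \<le> e * \<bar>r - s\<bar> powr \<alpha>"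
    using g \<open>e > 0\<close> unfolding nabla_frac_has_deriv_iff r_def by blast
  obtain \<delta>c where "\<delta>c > 0" and \<delta>c: "\<And>s. s \<in> T \<Longrightarrow> dist s t < \<delta>c \<Longrightarrow> dist (g s) (g t) < min 1 e"
    using g_cont \<open>e > 0\<close> unfolding continuous_within_eps_delta
    by (metis min_less_iff_conj zero_less_one)
  define \<delta> where "\<delta> = min \<delta>f (min \<delta>g \<delta>c)"
  show "\<exists>\<delta>>0. \<forall>s\<in>nabla_nbhd T \<alpha> t \<delta>.
          \<bar>(f r * g r - f s * g s) - (Lf * g t + f r * Lg) * fpow \<alpha> (r - s)\<bar> \<le> \<epsilon> * \<bar>r - s\<bar> powr \<alpha>"
  proof (intro exI[of _ \<delta>] conjI ballI)
    show "\<delta> > 0" using \<open>\<delta>f > 0\<close> \<open>\<delta>g > 0\<close> \<open>\<delta>c > 0\<close> by (simp add: \<delta>_def)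
    fix s assume s: "s \<in> nabla_nbhd T \<alpha> t \<delta>"
    then have "s \<in> T" by (simp add: nabla_nbhd_def)
    have "\<delta> \<le> \<delta>f" "\<delta> \<le> \<delta>g" by (simp_all add: \<delta>_def)
    then have "s \<in> nabla_nbhd T \<alpha> t \<delta>f" "s \<in> nabla_nbhd T \<alpha> t \<delta>g"
      using s nabla_nbhd_mono by blast+
    moreover have "\<bar>g s - g t\<bar> \<le> min 1 e"
      using \<delta>c[OF \<open>s \<in> T\<close>] dist_less_if_in_nabla_nbhd[OF s] by (simp add: \<delta>_def dist_real_def)
    ultimately have "\<bar>(f r * g r - f s * g s) - (Lf * g t + f r * Lg) * fpow \<alpha> (r - s)\<bar>
                       \<le> M * e * \<bar>r - s\<bar> powr \<alpha>"
      unfolding M_def using s abs_fpow_rho_le r_def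
      by (intro product_increment_estimate \<delta>f \<delta>g) auto
    also have "M * e = \<epsilon>" using \<open>M > 0\<close> by (simp add: e_def)
    finally show "\<bar>(f r * g r - f s * g s) - (Lf * g t + f r * Lg) * fpow \<alpha> (r - s)\<bar>
                    \<le> \<epsilon> * \<bar>r - s\<bar> powr \<alpha>" .
  qed
qed

lemma nabla_frac_has_deriv_const:
  "t \<in> Tk T \<Longrightarrow> nabla_frac_has_deriv T \<alpha> (\<lambda>s. c) t 0"
  unfolding nabla_frac_has_deriv_def by (auto intro!: exI[of _ 1])

lemma Leibniz_sum_Suc:
  fixes a b L :: "nat \<Rightarrow> 'a::comm_semiring_1"
  shows "(\<Sum>i=1..Suc n. (\<Prod>j=1..<i. a j) * L i * (\<Prod>j=i+1..Suc n. b j))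
           = (\<Sum>i=1..n. (\<Prod>j=1..<i. a j) * L i * (\<Prod>j=i+1..n. b j)) * b (Suc n)
             + (\<Prod>j=1..n. a j) * L (Suc n)"
proof -
  have "(\<Prod>j=i+1..Suc n. b j) = (\<Prod>j=i+1..n. b j) * b (Suc n)" if "i \<in> {1..n}" for i
    using that by (subst prod.nat_ivl_Suc') (auto simp: mult.commute)
  then have "(\<Sum>i=1..n. (\<Prod>j=1..<i. a j) * L i * (\<Prod>j=i+1..Suc n. b j))
               = (\<Sum>i=1..n. (\<Prod>j=1..<i. a j) * L i * (\<Prod>j=i+1..n. b j)) * b (Suc n)"
    unfolding sum_distrib_right by (intro sum.cong) (simp_all add: mult.assoc)
  then show ?thesis
    by (simp add: sum.nat_ivl_Suc' atLeastLessThanSuc_atLeastAtMost)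
qed

lemma nabla_frac_has_deriv_prod:
  fixes n :: nat
  assumes "t \<in> Tk T"
    and "\<And>i. i \<in> {1..n} \<Longrightarrow> continuous (at t within T) (f i)"
    and "\<And>i. i \<in> {1..n} \<Longrightarrow> nabla_frac_has_deriv T \<alpha> (f i) t (L i)"
  shows "nabla_frac_has_deriv T \<alpha> (\<lambda>s. \<Prod>i=1..n. f i s) t
           (\<Sum>i=1..n. (\<Prod>j=1..<i. f j (rho T t)) * L i * (\<Prod>j=i+1..n. f j t))"
  using assms(2,3)
proof (induction n)
  case 0
  show ?case using nabla_frac_has_deriv_const[OF assms(1)] by simp
next
  case (Suc n)
  have "(\<lambda>s. \<Prod>i=1..Suc n. f i s) = (\<lambda>s. (\<Prod>i=1..n. f i s) * f (Suc n) s)"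
    by (simp add: prod.nat_ivl_Suc')
  moreover from Suc have "nabla_frac_has_deriv T \<alpha> (\<lambda>s. (\<Prod>i=1..n. f i s) * f (Suc n) s) t
     ((\<Sum>i=1..n. (\<Prod>j=1..<i. f j (rho T t)) * L i * (\<Prod>j=i+1..n. f j t)) * f (Suc n) t
      + (\<Prod>i=1..n. f i (rho T t)) * L (Suc n))"
    by (intro nabla_frac_has_deriv_mult) auto
  ultimately show ?case by (simp only: Leibniz_sum_Suc)
qed

theorem mainTheorem10:
  fixes T :: "real set" and \<alpha> :: real and m :: nat and t :: real
    and f :: "nat \<Rightarrow> real \<Rightarrow> real" and L :: "nat \<Rightarrow> real"
  assumes "time_scale T"
    and "0 < \<alpha>" and "\<alpha> \<le> 1"
    and "m \<ge> 2"
    and "t \<in> Tk T"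
    and "\<And>i x. i \<in> {1..m} \<Longrightarrow> x \<in> Tk T \<Longrightarrow> continuous (at x within T) (f i)"
    and "\<And>i. i \<in> {1..m} \<Longrightarrow> nabla_frac_has_deriv T \<alpha> (f i) t (L i)"
  shows "nabla_frac_has_deriv T \<alpha> (\<lambda>s. \<Prod>i=1..m. f i s) t
           (\<Sum>i=1..m. (\<Prod>j=1..<i. f j (rho T t)) * L i * (\<Prod>j=i+1..m. f j t))"
  using assms(5-7) by (intro nabla_frac_has_deriv_prod) auto

end
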